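(* Let $b\geq 3$ and $h=\left\lceil\frac{(b-1)^2+1}{2}\right\rceil$. Then the zero entries of the Boolean matrix $(W_b)^{h-1}(W_b^t)^{h-1}$ occur only in the $(b,\lfloor \frac{b}{2}\rfloor)$ and $(\lfloor \frac{b}{2}\rfloor, b)$ positions.
   Context: Matrix products are Boolean ($1+1=1$). For $b\geq 3$, $W_b$ is the $b\times b$ $(0,1)$-matrix whose entries equal to $1$ are exactly those in positions $(i,i+1)$ for $1\leq i\leq b-1$, together with positions $(b-1,1)$ and $(b,1)$; all other entries are $0$. (Its digraph is the Wielandt graph: the cycle $1\to 2\to\cdots\to b\to 1$ plus the arc $b-1\to 1$.) $W_b^t$ denotes the transpose. *)

theory Defs
  imports Complex_Main
begin

text \<open>Boolean b x b matrices, indices in {1..b}, represented as nat \<Rightarrow> nat \<Rightarrow> bool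
  (True = entry 1, False = entry 0). Values outside {1..b} are irrelevant.\<close>

definition W :: "nat \<Rightarrow> nat \<Rightarrow> nat \<Rightarrow> bool" where
  "W b i j \<longleftrightarrow> (1 \<le> i \<and> i \<le> b - 1 \<and> j = i + 1) \<or> (i = b - 1 \<and> j = 1) \<or> (i = b \<and> j = 1)"

definition btransp :: "(nat \<Rightarrow> nat \<Rightarrow> bool) \<Rightarrow> nat \<Rightarrow> nat \<Rightarrow> bool" where
  "btransp A i j \<longleftrightarrow> A j i"

definition bmult :: "nat \<Rightarrow> (nat \<Rightarrow> nat \<Rightarrow> bool) \<Rightarrow> (nat \<Rightarrow> nat \<Rightarrow> bool) \<Rightarrow> nat \<Rightarrow> nat \<Rightarrow> bool" where
  "bmult b A B i j \<longleftrightarrow> (\<exists>k\<in>{1..b}. A i k \<and> B k j)"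

fun bpow :: "nat \<Rightarrow> (nat \<Rightarrow> nat \<Rightarrow> bool) \<Rightarrow> nat \<Rightarrow> nat \<Rightarrow> nat \<Rightarrow> bool" where
  "bpow b A 0 = (\<lambda>i j. i = j)"
| "bpow b A (Suc n) = bmult b (bpow b A n) A"

end

theory Submission
  imports Defs
begin

text \<open>The \<open>(i, j)\<close> entry of \<open>W\<^sup>m (W\<^sup>t)\<^sup>m\<close> is 1 iff \<open>i\<close> and \<open>j\<close> have a common
  out-neighbour \<open>k\<close> reached by walks of length exactly \<open>m\<close>. Closed walks through vertex 1 are
  composed of the two cycles, of lengths \<open>b - 1\<close> and \<open>b\<close>, so a walk of length \<open>m\<close> from \<open>i\<close>
  to \<open>k\<close> exists as soon as \<open>m + d(b, i) - k\<close> lies in the numerical semigroup \<open>\<langle>b - 1, b\<rangle>\<close>,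
  whose elements are the numbers \<open>t (b - 1) + r\<close> with \<open>r \<le> t\<close>. For \<open>m = h - 1\<close>, which is
  \<open>2s\<^sup>2\<close> for \<open>b = 2s + 1\<close> and \<open>2s\<^sup>2 + 2s\<close> for \<open>b = 2s + 2\<close>, a short case analysis
  produces such a \<open>k\<close> for both \<open>i\<close> and \<open>j\<close>, unless \<open>{i, j} = {b, b div 2}\<close>.\<close>

definition in_semigroup_consec :: "nat \<Rightarrow> nat \<Rightarrow> bool" where
  "in_semigroup_consec a n \<longleftrightarrow> (\<exists>x y. n = x * a + y * (a + 1))"

lemma in_semigroup_consec_iff:
  "in_semigroup_consec a n \<longleftrightarrow> (\<exists>t r. r \<le> t \<and> n = t * a + r)"
proof
  assume "in_semigroup_consec a n"
  then obtain x y where "n = x * a + y * (a + 1)"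
    unfolding in_semigroup_consec_def by blast
  then have "y \<le> x + y \<and> n = (x + y) * a + y"
    by (simp add: algebra_simps)
  then show "\<exists>t r. r \<le> t \<and> n = t * a + r" by blast
next
  assume "\<exists>t r. r \<le> t \<and> n = t * a + r"
  then obtain t r where "r \<le> t" "n = t * a + r" by blast
  then have "n = (t - r) * a + r * (a + 1)"
    by (simp add: algebra_simps diff_mult_distrib)
  then show "in_semigroup_consec a n"
    unfolding in_semigroup_consec_def by blast
qed

lemma in_semigroup_consec_less:
  assumes "in_semigroup_consec a n" "n < a"
  shows "n = 0"
proof -
  obtain t r where "r \<le> t" "n = t * a + r"
    using assms(1) in_semigroup_consec_iff by blast
  moreover have "t = 0"
    using \<open>n = t * a + r\<close> assms(2) by (cases t) auto
  ultimately show ?thesis by simp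
qed

lemma in_semigroup_consec_cases:
  assumes "in_semigroup_consec a n" "n > 0"
  obtains "a \<le> n" "in_semigroup_consec a (n - a)"
        | "a + 1 \<le> n" "in_semigroup_consec a (n - (a + 1))"
proof -
  obtain x y where n: "n = x * a + y * (a + 1)"
    using assms(1) unfolding in_semigroup_consec_def by blast
  show ?thesis
  proof (cases x)
    case (Suc x')
    then have "n - a = x' * a + y * (a + 1)" "a \<le> n" using n by auto
    then show ?thesis using that(1) unfolding in_semigroup_consec_def by blast
  next
    case 0
    then obtain y' where "y = Suc y'" using n assms(2) by (cases y) auto
    then have "n - (a + 1) = x * a + y' * (a + 1)" "a + 1 \<le> n" using n by auto
    then show ?thesis using that(2) unfolding in_semigroup_consec_def by blast
  qed
qed

definition gap_in_semigroup :: "nat \<Rightarrow> nat \<Rightarrow> nat \<Rightarrow> bool" where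
  "gap_in_semigroup a N k \<longleftrightarrow> k \<le> N \<and> in_semigroup_consec a (N - k)"

lemma gap_in_semigroupI:
  assumes "N = k + (t * a + r)" "r \<le> t"
  shows "gap_in_semigroup a N k"
  using assms unfolding gap_in_semigroup_def in_semigroup_consec_iff by auto

lemma bpow_Suc_left:
  assumes "i \<in> {1..b}" "j \<in> {1..b}"
  shows "bpow b A (Suc n) i j = bmult b A (bpow b A n) i j"
  using assms(2)
proof (induction n arbitrary: j)
  case 0
  then show ?case using assms(1) by (auto simp: bmult_def)
next
  case (Suc n)
  then show ?case by (simp add: bmult_def) blast
qed

lemma bpow_btransp:
  assumes "i \<in> {1..b}" "j \<in> {1..b}"
  shows "bpow b (btransp A) n i j = bpow b A n j i"
  using assms(2)
proof (induction n arbitrary: j)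
  case (Suc n)
  have "bpow b (btransp A) (Suc n) i j \<longleftrightarrow> (\<exists>k\<in>{1..b}. A j k \<and> bpow b A n k i)"
    using Suc.IH unfolding bpow.simps bmult_def btransp_def[of A] by blast
  also have "\<dots> \<longleftrightarrow> bpow b A (Suc n) j i"
    using bpow_Suc_left[OF Suc.prems assms(1)] by (simp add: bmult_def)
  finally show ?case .
qed auto

text \<open>The length of the shortest walk from vertex \<open>b\<close> to vertex \<open>i\<close> in the Wielandt digraph.\<close>
definition wdist :: "nat \<Rightarrow> nat \<Rightarrow> nat" where
  "wdist b i = (if i = b then 0 else i)"

lemma wdist_le: "i \<in> {1..b} \<Longrightarrow> wdist b i \<le> b - 1"
  by (auto simp: wdist_def)

text \<open>Measuring lengths from vertex \<open>b\<close>, which precedes \<open>i\<close> by \<open>wdist b i\<close> steps, treats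
  all start vertices alike; the induction peels off the last arc, into \<open>k\<close>.\<close>
lemma bpow_W_if_gap:
  assumes b: "b \<ge> 2" and i: "i \<in> {1..b}"
    and "k \<in> {1..b}" "gap_in_semigroup (b - 1) (n + wdist b i) k"
  shows "bpow b (W b) n i k"
  using assms(3,4)
proof (induction n arbitrary: k)
  case 0
  then have le: "k \<le> wdist b i" and S: "in_semigroup_consec (b - 1) (wdist b i - k)"
    by (simp_all add: gap_in_semigroup_def)
  have "wdist b i - k < b - 1" using le wdist_le[OF i] "0"(1) by auto
  then have "k = wdist b i" using le in_semigroup_consec_less[OF S] by simp
  then show ?case using "0"(1) i by (auto simp: wdist_def split: if_splits)
next
  case (Suc n)
  have step: "bpow b (W b) (Suc n) i k"
    if "l \<in> {1..b}" "W b l k" "gap_in_semigroup (b - 1) (n + wdist b i) l" for l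
    using Suc.IH[OF that(1,3)] that(1,2) by (auto simp: bmult_def)
  show ?case
  proof (cases "k \<ge> 2")
    case True
    show ?thesis
      by (rule step[of "k - 1"]) (use True Suc.prems in \<open>auto simp: W_def gap_in_semigroup_def\<close>)
  next
    case False
    then have k: "k = 1" using Suc.prems(1) by auto
    then have S: "in_semigroup_consec (b - 1) (n + wdist b i)"
      using Suc.prems(2) by (simp add: gap_in_semigroup_def)
    show ?thesis
    proof (cases "n + wdist b i = 0")
      case True
      then show ?thesis using k b i by (auto simp: wdist_def W_def bmult_def split: if_splits)
    next
      case False
      then have "n + wdist b i > 0" by simp
      then show ?thesis
      proof (rule in_semigroup_consec_cases[OF S])
        assume "b - 1 \<le> n + wdist b i" "in_semigroup_consec (b - 1) (n + wdist b i - (b - 1))"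
        then show ?thesis
          by (intro step[of "b - 1"]) (use k b in \<open>auto simp: W_def gap_in_semigroup_def\<close>)
      next
        assume "b - 1 + 1 \<le> n + wdist b i" "in_semigroup_consec (b - 1) (n + wdist b i - (b - 1 + 1))"
        then show ?thesis
          by (intro step[of b]) (use k b in \<open>auto simp: W_def gap_in_semigroup_def\<close>)
      qed
    qed
  qed
qed

lemma common_gap_odd:
  assumes b: "b = 2 * s + 1" and "s \<ge> 1" and p: "p1 \<le> p2" "p2 \<le> 2 * s"
    and not_exc: "\<not> (p1 = 0 \<and> p2 = s)"
  shows "\<exists>k\<in>{1..b}. gap_in_semigroup (b - 1) (2 * s * s + p1) k
                    \<and> gap_in_semigroup (b - 1) (2 * s * s + p2) k"
proof -
  have a: "b - 1 = 2 * s" using b by simp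
  obtain u where u: "s = Suc u" using \<open>s \<ge> 1\<close> by (cases s) auto
  obtain d where d: "p2 = p1 + d" using p(1) le_Suc_ex by blast
  consider "p1 \<ge> 1" "d \<le> s" | "p1 = 0" "d \<le> u" | "d \<ge> s + 1"
    using not_exc d u by linarith
  then show ?thesis
  proof cases
    case 1
    have "gap_in_semigroup (2 * s) (2 * s * s + p1) p1"
      by (rule gap_in_semigroupI[of _ _ s _ 0]) (simp_all add: algebra_simps)
    moreover have "gap_in_semigroup (2 * s) (2 * s * s + p2) p1"
      using 1 by (intro gap_in_semigroupI[of _ _ s _ d]) (simp_all add: d algebra_simps)
    ultimately show ?thesis using 1 p b a by auto
  next
    case 2
    have "gap_in_semigroup (2 * s) (2 * s * s + p1) (2 * s)"
      using 2 by (intro gap_in_semigroupI[of _ _ u _ 0]) (simp_all add: u algebra_simps)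
    moreover have "gap_in_semigroup (2 * s) (2 * s * s + p2) (2 * s)"
      using 2 by (intro gap_in_semigroupI[of _ _ u _ d]) (simp_all add: u d algebra_simps)
    ultimately show ?thesis using b a u by auto
  next
    case 3
    then obtain e where e: "d = s + 1 + e" using le_Suc_ex by blast
    have "gap_in_semigroup (2 * s) (2 * s * s + p1) (s + 1 + p1)"
      by (intro gap_in_semigroupI[of _ _ u _ u]) (simp_all add: u algebra_simps)
    moreover have "gap_in_semigroup (2 * s) (2 * s * s + p2) (s + 1 + p1)"
      using p d e by (intro gap_in_semigroupI[of _ _ s _ e]) (simp_all add: algebra_simps)
    ultimately show ?thesis using p d e b a by auto
  qed
qed

lemma common_gap_even:
  assumes b: "b = 2 * s + 2" and "s \<ge> 1" and p: "p1 \<le> p2" "p2 \<le> 2 * s + 1"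
    and not_exc: "\<not> (p1 = 0 \<and> p2 = s + 1)"
  shows "\<exists>k\<in>{1..b}. gap_in_semigroup (b - 1) (2 * s * s + 2 * s + p1) k
                    \<and> gap_in_semigroup (b - 1) (2 * s * s + 2 * s + p2) k"
proof -
  have a: "b - 1 = 2 * s + 1" using b by simp
  obtain u where u: "s = Suc u" using \<open>s \<ge> 1\<close> by (cases s) auto
  obtain d where d: "p2 = p1 + d" using p(1) le_Suc_ex by blast
  consider "d \<le> s" "p1 \<ge> s + 2" | "d \<le> s" "p1 \<le> s + 1" | "d \<ge> s + 2" "p1 = 0"
    | "d \<ge> s + 1" "p1 \<ge> 1"
    using not_exc d by linarith
  then show ?thesis
  proof cases
    case 1
    then obtain q where q: "p1 = s + 2 + q" using le_Suc_ex by blast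
    have "gap_in_semigroup (2 * s + 1) (2 * s * s + 2 * s + p1) b"
      by (intro gap_in_semigroupI[of _ _ s _ q]) (use p d q b in \<open>simp_all add: algebra_simps\<close>)
    moreover have "gap_in_semigroup (2 * s + 1) (2 * s * s + 2 * s + p2) b"
      by (intro gap_in_semigroupI[of _ _ s _ "q + d"]) (use p d q b in \<open>simp_all add: algebra_simps\<close>)
    ultimately show ?thesis using a b by auto
  next
    case 2
    have "gap_in_semigroup (2 * s + 1) (2 * s * s + 2 * s + p1) (s + p1)"
      by (intro gap_in_semigroupI[of _ _ s _ 0]) (simp_all add: algebra_simps)
    moreover have "gap_in_semigroup (2 * s + 1) (2 * s * s + 2 * s + p2) (s + p1)"
      by (intro gap_in_semigroupI[of _ _ s _ d]) (use 2 d in \<open>simp_all add: algebra_simps\<close>)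
    ultimately show ?thesis using 2 a b \<open>s \<ge> 1\<close> by auto
  next
    case 3
    then obtain q where q: "p2 = s + 2 + q" using d le_Suc_ex[of "s + 2" p2] by auto
    have "gap_in_semigroup (2 * s + 1) (2 * s * s + 2 * s + p1) b"
      by (intro gap_in_semigroupI[of _ _ u _ u]) (use 3 u b in \<open>simp_all add: algebra_simps\<close>)
    moreover have "gap_in_semigroup (2 * s + 1) (2 * s * s + 2 * s + p2) b"
      by (intro gap_in_semigroupI[of _ _ s _ q]) (use p q b in \<open>simp_all add: algebra_simps\<close>)
    ultimately show ?thesis using a b by auto
  next
    case 4
    then obtain e k where e: "d = s + 1 + e" and k: "k = p1 + e" using le_Suc_ex by blast
    have "gap_in_semigroup (2 * s + 1) (2 * s * s + 2 * s + p1) k"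
      by (intro gap_in_semigroupI[of _ _ s _ "s - e"]) (use p d e k in \<open>simp_all add: algebra_simps\<close>)
    moreover have "gap_in_semigroup (2 * s + 1) (2 * s * s + 2 * s + p2) k"
      by (intro gap_in_semigroupI[of _ _ "s + 1" _ 0]) (use d e k in \<open>simp_all add: algebra_simps\<close>)
    ultimately show ?thesis using 4 p d e k a b by auto
  qed
qed

lemma ceiling_half_sq_odd:
  assumes "b = 2 * s + 1"
  shows "nat \<lceil>(real ((b - 1)^2) + 1) / 2\<rceil> = 2 * s * s + 1"
proof -
  have "real ((b - 1)^2) = 4 * (real s * real s)"
    using assms by (simp add: power2_eq_square)
  then have "\<lceil>(real ((b - 1)^2) + 1) / 2\<rceil> = int (2 * s * s + 1)"
    by (intro ceiling_unique) simp_all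
  then show ?thesis by (metis nat_int)
qed

lemma ceiling_half_sq_even:
  assumes "b = 2 * s + 2"
  shows "nat \<lceil>(real ((b - 1)^2) + 1) / 2\<rceil> = 2 * s * s + 2 * s + 1"
proof -
  have "real ((b - 1)^2) = 4 * (real s * real s) + 4 * real s + 1"
    using assms by (simp add: power2_eq_square algebra_simps)
  then have "\<lceil>(real ((b - 1)^2) + 1) / 2\<rceil> = int (2 * s * s + 2 * s + 1)"
    by (intro ceiling_unique) simp_all
  then show ?thesis by (metis nat_int)
qed

lemma common_gap:
  fixes b h :: nat
  assumes b: "b \<ge> 3" and h: "h = nat \<lceil>(real ((b - 1)^2) + 1) / 2\<rceil>"
    and p: "p1 \<le> b - 1" "p2 \<le> b - 1"
    and not_exc: "\<not> (p1 = 0 \<and> p2 = b div 2)" "\<not> (p2 = 0 \<and> p1 = b div 2)"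
  shows "\<exists>k\<in>{1..b}. gap_in_semigroup (b - 1) (h - 1 + p1) k
                    \<and> gap_in_semigroup (b - 1) (h - 1 + p2) k"
proof -
  obtain s where "s \<ge> 1" and parity: "b = 2 * s + 1 \<or> b = 2 * s + 2"
    using b by (intro that[of "(b - 1) div 2"]) auto
  have ordered: "\<exists>k\<in>{1..b}. gap_in_semigroup (b - 1) (h - 1 + q1) k
                                 \<and> gap_in_semigroup (b - 1) (h - 1 + q2) k"
    if "q1 \<le> q2" "q2 \<le> b - 1" "\<not> (q1 = 0 \<and> q2 = b div 2)" for q1 q2
    using parity
  proof
    assume odd: "b = 2 * s + 1"
    have "h - 1 = 2 * s * s" unfolding h ceiling_half_sq_odd[OF odd] by simp
    then show ?thesis
      using common_gap_odd[OF odd \<open>s \<ge> 1\<close> that(1)] that odd by simp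
  next
    assume even: "b = 2 * s + 2"
    have "h - 1 = 2 * s * s + 2 * s" unfolding h ceiling_half_sq_even[OF even] by simp
    then show ?thesis
      using common_gap_even[OF even \<open>s \<ge> 1\<close> that(1)] that even by simp
  qed
  show ?thesis
  proof (cases "p1 \<le> p2")
    case True
    then show ?thesis using ordered p not_exc by blast
  next
    case False
    then show ?thesis using ordered[of p2 p1] p not_exc by auto
  qed
qed

theorem lemma2p4:
  fixes b h :: nat
  assumes "b \<ge> 3"
    and "h = nat \<lceil>(real ((b - 1)^2) + 1) / 2\<rceil>"
  shows "\<forall>i\<in>{1..b}. \<forall>j\<in>{1..b}.
           \<not> bmult b (bpow b (W b) (h - 1)) (bpow b (btransp (W b)) (h - 1)) i j
           \<longrightarrow> (i = b \<and> j = b div 2) \<or> (i = b div 2 \<and> j = b)"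
proof (intro ballI impI)
  fix i j assume i: "i \<in> {1..b}" and j: "j \<in> {1..b}"
    and no_walk: "\<not> bmult b (bpow b (W b) (h - 1)) (bpow b (btransp (W b)) (h - 1)) i j"
  show "(i = b \<and> j = b div 2) \<or> (i = b div 2 \<and> j = b)"
  proof (rule ccontr)
    assume not_exc: "\<not> ((i = b \<and> j = b div 2) \<or> (i = b div 2 \<and> j = b))"
    obtain k where k: "k \<in> {1..b}"
      and "gap_in_semigroup (b - 1) (h - 1 + wdist b i) k"
      and "gap_in_semigroup (b - 1) (h - 1 + wdist b j) k"
      using common_gap[OF assms, of "wdist b i" "wdist b j"] wdist_le[OF i] wdist_le[OF j]
        not_exc i j \<open>b \<ge> 3\<close> by (auto simp: wdist_def split: if_splits)
    then have "bpow b (W b) (h - 1) i k" "bpow b (btransp (W b)) (h - 1) k j"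
      using bpow_W_if_gap \<open>b \<ge> 3\<close> i j bpow_btransp[OF k j] by auto
    then show False using no_walk k by (auto simp: bmult_def)
  qed
qed

end
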